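(* Let $s(a,b)$ and $s(c,d)$ be proper $n$-sided one-step dice with $s(a,b)>s(c,d)$. Then there are integers $x,y,z$ such that the ordered pair $(s(a,b),s(c,d))$ has one of the following four forms: (1) $s(a,b)=s(x,y)$ and $s(c,d)=s(y,z)$; (2) $s(a,b)=s(x,y)$ and $s(c,d)=s(z,x+2)$; (3) $s(a,b)=s(x+1,y)$ and $s(c,d)=s(x,z)$; (4) $s(a,b)=s(x,y+1)$ and $s(c,d)=s(z,y)$.
   Context: Let $n\ge 3$. An $n$-sided die is a non-decreasing $n$-tuple of integers $(a_1,\dots,a_n)$. The standard die is $P_n=(1,2,\dots,n)$. For integers $a,b$ with $1\le a\le n-1$, $2\le b\le n$ and $b\notin\{a,a+1\}$, let $s(a,b)$ denote the die obtained from $P_n$ by replacing the face with value $a$ by $a+1$ and the face with value $b$ by $b-1$ (faces then arranged in non-decreasing order); these are the proper $n$-sided one-step dice. For two $n$-sided dice $A=(a_1,\dots,a_n)$, $B=(b_1,\dots,b_n)$ we write $A>B$ ("$A$ beats $B$") if $\#\{(i,j): a_i>b_j\} > \#\{(i,j): b_j>a_i\}$, where $(i,j)$ ranges over $\{1,\dots,n\}^2$; if the two counts are equal, $A$ and $B$ tie. *)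

theory Defs
  imports Main
begin

definition is_die :: "nat \<Rightarrow> int list \<Rightarrow> bool" where
  "is_die n A \<longleftrightarrow> length A = n \<and> sorted A"

definition std_die :: "nat \<Rightarrow> int list" where
  "std_die n = [1..int n]"

definition one_step :: "nat \<Rightarrow> int \<Rightarrow> int \<Rightarrow> int list" where
  "one_step n a b =
     sort (map (\<lambda>v. if v = a then a + 1 else if v = b then b - 1 else v) (std_die n))"

definition proper_params :: "nat \<Rightarrow> int \<Rightarrow> int \<Rightarrow> bool" where
  "proper_params n a b \<longleftrightarrow>
     1 \<le> a \<and> a \<le> int n - 1 \<and> 2 \<le> b \<and> b \<le> int n \<and> b \<noteq> a \<and> b \<noteq> a + 1"

definition wins :: "int list \<Rightarrow> int list \<Rightarrow> nat" where
  "wins A B = card {(i, j). i < length A \<and> j < length B \<and> A ! i > B ! j}"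

definition beats :: "int list \<Rightarrow> int list \<Rightarrow> bool" where
  "beats A B \<longleftrightarrow> wins A B > wins B A"

end

theory Submission imports Defs "HOL-Library.Multiset" begin

text \<open>Writing the margin of \<open>A\<close> over \<open>B\<close> as \<open>\<Sum>x\<in>A. \<Sum>y\<in>B. sgn (x - y)\<close>, the margin
  of \<open>s(a,b)\<close> over \<open>s(c,d)\<close> is obtained from the (vanishing) margin of \<open>P\<^sub>n\<close> over itself by
  moving two faces of each die. Since \<open>u \<mapsto> \<Sum>j\<in>{1..n}. sgn (u - j) = 2u - n - 1\<close> is affine
  on the faces, all contributions cancel except second differences of \<open>sgn\<close>, which are
  nonzero only at \<open>\<pm>1\<close>. The margin thus becomes a signed count of the coincidences
  \<open>c = b\<close>, \<open>d = a + 2\<close>, \<open>a = c + 1\<close>, \<open>b = d + 1\<close>, and a positive margin forces one of them.\<close>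

lemma int_wins_eq_sum_nth:
  "int (wins A B) = (\<Sum>i<length A. \<Sum>j<length B. if B ! j < A ! i then 1 else 0)"
proof -
  have "{(i, j). i < length A \<and> j < length B \<and> A ! i > B ! j}
      = {p \<in> {..<length A} \<times> {..<length B}. A ! fst p > B ! snd p}"
    by auto
  then have "wins A B = (\<Sum>p\<in>{..<length A} \<times> {..<length B}. if B ! snd p < A ! fst p then 1 else 0)"
    unfolding wins_def by (simp add: sum.inter_filter[symmetric])
  also have "\<dots> = (\<Sum>i<length A. \<Sum>j<length B. if B ! j < A ! i then 1 else 0)"
    by (simp add: sum.cartesian_product case_prod_beta)
  finally show ?thesis
    by (simp add: of_nat_sum if_distrib cong: if_cong)
qed

lemma wins_margin_eq_sum_sgn:
  fixes A B :: "int list"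
  shows "int (wins A B) - int (wins B A) = (\<Sum>x\<leftarrow>A. \<Sum>y\<leftarrow>B. sgn (x - y))"
proof -
  have "int (wins B A) = (\<Sum>i<length A. \<Sum>j<length B. if A ! i < B ! j then 1 else 0)"
    unfolding int_wins_eq_sum_nth by (rule sum.swap)
  then have "int (wins A B) - int (wins B A) = (\<Sum>i<length A. \<Sum>j<length B. sgn (A ! i - B ! j))"
    unfolding int_wins_eq_sum_nth
    by (simp add: sum_subtractf[symmetric] sgn_if) (intro sum.cong refl; simp)
  then show ?thesis
    by (simp add: sum_list_sum_nth atLeast0LessThan)
qed

lemma sum_update_two_points:
  fixes f :: "int \<Rightarrow> 'a::ab_group_add"
  assumes "a \<noteq> b" "a \<in> I" "b \<in> I" "finite I"
  shows "(\<Sum>i\<in>I. f (if i = a then a' else if i = b then b' else i))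
       = (\<Sum>i\<in>I. f i) - f a - f b + f a' + f b'"
proof -
  let ?g = "\<lambda>i. f (if i = a then a' else if i = b then b' else i)"
  have "(\<Sum>i\<in>I. ?g i) = ?g a + ?g b + (\<Sum>i\<in>I - {a} - {b}. ?g i)"
    and "(\<Sum>i\<in>I. f i) = f a + f b + (\<Sum>i\<in>I - {a} - {b}. f i)"
    using assms by (simp_all add: sum.remove[of _ a] sum.remove[of _ b])
  moreover have "(\<Sum>i\<in>I - {a} - {b}. ?g i) = (\<Sum>i\<in>I - {a} - {b}. f i)"
    by (rule sum.cong) auto
  ultimately show ?thesis
    using assms by (simp add: algebra_simps)
qed

lemma sum_list_one_step:
  fixes f :: "int \<Rightarrow> 'a::ab_group_add"
  assumes "proper_params n a b"
  shows "(\<Sum>x\<leftarrow>one_step n a b. f x)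
       = (\<Sum>i\<in>{1..int n}. f i) - f a - f b + f (a + 1) + f (b - 1)"
proof -
  have "(\<Sum>x\<leftarrow>one_step n a b. f x)
      = (\<Sum>x\<leftarrow>map (\<lambda>v. if v = a then a + 1 else if v = b then b - 1 else v) [1..int n]. f x)"
    unfolding one_step_def std_die_def
    by (simp only: sum_mset_sum_list[symmetric] mset_map mset_sort)
  also have "\<dots> = (\<Sum>i\<in>{1..int n}. f (if i = a then a + 1 else if i = b then b - 1 else i))"
    by (simp add: sum_list_distinct_conv_sum_set o_def)
  also have "\<dots> = (\<Sum>i\<in>{1..int n}. f i) - f a - f b + f (a + 1) + f (b - 1)"
    using assms by (intro sum_update_two_points) (auto simp: proper_params_def)
  finally show ?thesis .
qed

lemma sum_sgn_diff_interval:
  fixes u m :: int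
  assumes "1 \<le> u" "u \<le> m"
  shows "(\<Sum>j\<in>{1..m}. sgn (u - j)) = 2 * u - m - 1"
proof -
  have split: "{1..m} = {1..<u} \<union> insert u {u<..m}"
    using assms by auto
  have "(\<Sum>j\<in>{1..m}. sgn (u - j))
      = (\<Sum>j\<in>{1..<u}. sgn (u - j)) + (\<Sum>j\<in>{u<..m}. sgn (u - j))"
    unfolding split by (subst sum.union_disjoint) auto
  also have "(\<Sum>j\<in>{1..<u}. sgn (u - j)) = (\<Sum>j\<in>{1..<u}. 1)"
    by (rule sum.cong) auto
  also have "(\<Sum>j\<in>{u<..m}. sgn (u - j)) = (\<Sum>j\<in>{u<..m}. -1)"
    by (rule sum.cong) auto
  finally show ?thesis
    using assms by simp
qed

lemma sum_sum_sgn_diff_eq_0: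
  fixes I :: "'a::linordered_idom set"
  shows "(\<Sum>i\<in>I. \<Sum>j\<in>I. sgn (i - j)) = 0"
proof -
  have "(\<Sum>i\<in>I. \<Sum>j\<in>I. sgn (i - j)) = (\<Sum>j\<in>I. \<Sum>i\<in>I. - sgn (j - i))"
    by (subst sum.swap) (simp add: sgn_minus[symmetric])
  then show ?thesis
    by (simp add: sum_negf)
qed

definition sgn_kink :: "int \<Rightarrow> int" where
  "sgn_kink k = 2 * sgn k - sgn (k - 1) - sgn (k + 1)"

lemma sgn_kink_eq: "sgn_kink k = (if k = 1 then 1 else if k = -1 then -1 else 0)"
  unfolding sgn_kink_def by (cases "k \<ge> 2"; cases "k \<le> -2"; auto simp: sgn_if)

lemma wins_margin_one_step:
  assumes "proper_params n a b" "proper_params n c d"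
  shows "int (wins (one_step n a b) (one_step n c d)) - int (wins (one_step n c d) (one_step n a b))
       = sgn_kink (a - c) - sgn_kink (a - d + 1) - sgn_kink (b - 1 - c) + sgn_kink (b - d)"
proof -
  define m where "m = int n"
  define S where "S u = (\<Sum>j\<in>{1..m}. sgn (u - j))" for u
  \<comment> \<open>\<open>G u = (\<Sum>y\<leftarrow>one_step n c d. sgn (u - y))\<close> by \<open>sum_list_one_step\<close>.\<close>
  define G where "G u = S u - sgn (u - c) - sgn (u - d) + sgn (u - (c + 1)) + sgn (u - (d - 1))" for u
  have S_eq: "S u = 2 * u - m - 1" if "1 \<le> u" "u \<le> m" for u
    unfolding S_def using that by (rule sum_sgn_diff_interval)
  have pa: "1 \<le> a" "a + 1 \<le> m" "2 \<le> b" "b \<le> m"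
    using assms(1) by (auto simp: proper_params_def m_def)
  have pc: "1 \<le> c" "c + 1 \<le> m" "2 \<le> d" "d \<le> m"
    using assms(2) by (auto simp: proper_params_def m_def)
  have sum_sgn_flip: "(\<Sum>i\<in>{1..m}. sgn (i - v)) = - S v" for v
    unfolding S_def by (simp add: sum_negf[symmetric] sgn_minus[symmetric])
  have "(\<Sum>i\<in>{1..m}. G i) = (\<Sum>i\<in>{1..m}. S i) + S c + S d - S (c + 1) - S (d - 1)"
    unfolding G_def by (simp add: sum.distrib sum_subtractf sum_sgn_flip)
  also have "(\<Sum>i\<in>{1..m}. S i) = 0"
    unfolding S_def by (rule sum_sum_sgn_diff_eq_0)
  finally have G_total: "(\<Sum>i\<in>{1..m}. G i) = 0"
    using pc S_eq by simp
  have "int (wins (one_step n a b) (one_step n c d)) - int (wins (one_step n c d) (one_step n a b))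
      = (\<Sum>x\<leftarrow>one_step n a b. G x)"
    unfolding wins_margin_eq_sum_sgn sum_list_one_step[OF assms(2)] G_def S_def m_def ..
  also have "\<dots> = (\<Sum>i\<in>{1..m}. G i) - G a - G b + G (a + 1) + G (b - 1)"
    unfolding sum_list_one_step[OF assms(1)] m_def ..
  also have "\<dots> = sgn_kink (a - c) - sgn_kink (a - d + 1) - sgn_kink (b - 1 - c) + sgn_kink (b - d)"
    unfolding G_total unfolding G_def sgn_kink_def
    using pa S_eq[of a] S_eq[of "a + 1"] S_eq[of b] S_eq[of "b - 1"]
    by (simp add: algebra_simps)
  finally show ?thesis .
qed

lemma beats_one_step_coincidence:
  assumes "proper_params n a b" "proper_params n c d"
    and "beats (one_step n a b) (one_step n c d)"
  shows "c = b \<or> d = a + 2 \<or> a = c + 1 \<or> b = d + 1"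
proof -
  have "sgn_kink (a - c) - sgn_kink (a - d + 1) - sgn_kink (b - 1 - c) + sgn_kink (b - d) > 0"
    using assms(3) wins_margin_one_step[OF assms(1,2)] unfolding beats_def by simp
  then show ?thesis
    unfolding sgn_kink_eq by (auto split: if_splits)
qed

theorem mainTheorem2:
  fixes n :: nat and a b c d :: int
  assumes "n \<ge> 3"
    and "proper_params n a b" and "proper_params n c d"
    and "beats (one_step n a b) (one_step n c d)"
  shows "\<exists>x y z :: int.
     (proper_params n x y \<and> proper_params n y z \<and>
        one_step n a b = one_step n x y \<and> one_step n c d = one_step n y z)
   \<or> (proper_params n x y \<and> proper_params n z (x + 2) \<and>
        one_step n a b = one_step n x y \<and> one_step n c d = one_step n z (x + 2))
   \<or> (proper_params n (x + 1) y \<and> proper_params n x z \<and>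
        one_step n a b = one_step n (x + 1) y \<and> one_step n c d = one_step n x z)
   \<or> (proper_params n x (y + 1) \<and> proper_params n z y \<and>
        one_step n a b = one_step n x (y + 1) \<and> one_step n c d = one_step n z y)"
  using beats_one_step_coincidence[OF assms(2-4)]
proof (elim disjE)
  assume "c = b" then show ?thesis using assms(2,3) by blast
next
  assume "d = a + 2" then show ?thesis using assms(2,3) by blast
next
  assume "a = c + 1" then show ?thesis using assms(2,3) by blast
next
  assume "b = d + 1" then show ?thesis using assms(2,3) by blast
qed

end
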